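(* Let $I=[s,t]\subseteq\mathbb R/\mathbb Z$ be an $R$-interval, and let $(c_1,c_2)$ be either (blue, red) or (red, blue). Then there exist points $x_1,x_2$ with $s<x_1<x_2<t$ (in the cyclic order of $I$) such that $[s,x_1],[x_1,x_2],[x_2,t]$ are $R$-intervals, $x_1$ has color $c_1$ and $x_2$ has color $c_2$.
   Context: Let $\sigma_3(t)=3t$ on $\mathbb R/\mathbb Z$. An interval $I=[s,t]\subseteq\mathbb R/\mathbb Z$ is an $R$-interval if there is $n\ge0$ such that $\sigma_3^n$ maps $(s,t)$ homeomorphically onto $(0,1)$, $(0,\frac23)$ or $(\frac13,1)$. Colors of $3$-adic rationals: a point $p/3^n$ with $n\ge1$, $0<p<3^n$, $3\nmid p$ is red if $p\equiv1\pmod 3$ and blue if $p\equiv2\pmod3$; the point $0$ is blue. *)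

theory Defs
  imports Complex_Main
begin

(* Points of R/Z are represented by real lifts; x and x + k (k integer) denote the same point.
   A closed arc [s,t] of R/Z (traversed counterclockwise from s to t) is represented by
   lifts s < t <= s + 1 (t = s + 1 means s = t in R/Z, the arc being the whole circle). *)

(* sigma_3^n maps the open arc (s,t) homeomorphically onto the open arc (a,b) of R/Z
   iff it is injective on (s,t), i.e. 3^n (t - s) <= 1, and the image arc, which is
   (3^n s, 3^n t) mod 1, equals (a,b).  The three target arcs are
   (0,1) = circle minus 0 (length 1, start 0), (0,2/3) (length 2/3, start 0),
   (1/3,1) (length 2/3, start 1/3). *)
definition R_interval :: "real \<Rightarrow> real \<Rightarrow> bool" where
  "R_interval s t \<longleftrightarrow> s < t \<and> t \<le> s + 1 \<and>
     (\<exists>n::nat.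
        (3^n * (t - s) = 1 \<and> frac (3^n * s) = 0) \<or>
        (3^n * (t - s) = 2/3 \<and> frac (3^n * s) = 0) \<or>
        (3^n * (t - s) = 2/3 \<and> frac (3^n * s) = 1/3))"

datatype color = Red | Blue

definition has_color :: "real \<Rightarrow> color \<Rightarrow> bool" where
  "has_color x c \<longleftrightarrow>
     (c = Blue \<and> frac x = 0) \<or>
     (\<exists>(n::nat) (p::nat). n \<ge> 1 \<and> 0 < p \<and> p < 3^n \<and> \<not> 3 dvd p \<and>
        frac x = real p / 3^n \<and>
        ((c = Red \<and> p mod 3 = 1) \<or> (c = Blue \<and> p mod 3 = 2)))"

end

theory Submission
  imports Defs
begin

text \<open>The maps \<open>x \<mapsto> (x + k) / 3^n\<close> with \<open>k \<in> \<int>\<close> send R-intervals to R-intervals and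
  preserve the colour of every non-integer triadic point \<open>p / 3^m\<close>, since the new numerator
  \<open>p + 3^m k\<close> is congruent to \<open>p\<close> mod 3. Conversely, if \<open>\<sigma>\<^sub>3^n\<close> maps \<open>(s, t)\<close> onto one of
  the three target arcs, then \<open>[s, t]\<close> is the image of \<open>[0, 1]\<close>, \<open>[0, 2/3]\<close> or \<open>[1/3, 1]\<close> under
  such a map with \<open>k = \<lfloor>3^n s\<rfloor>\<close>. So it suffices to subdivide these three basic intervals,
  which is done by explicit points of denominator 3 or 9.\<close>

lemma R_interval_affine:
  fixes k :: int
  assumes "R_interval s t"
  shows "R_interval ((s + k) / 3^n) ((t + k) / 3^n)"
proof -
  obtain m :: nat where m:
    "(3^m * (t - s) = 1 \<and> frac (3^m * s) = 0) \<or>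
     (3^m * (t - s) = 2/3 \<and> frac (3^m * s) = 0) \<or>
     (3^m * (t - s) = 2/3 \<and> frac (3^m * s) = 1/3)"
    using assms unfolding R_interval_def by blast
  have "3^(m + n) * ((t + k) / 3^n - (s + k) / 3^n) = 3^m * (t - s)"
    by (simp add: power_add field_simps)
  moreover have "frac (3^(m + n) * ((s + k) / 3^n)) = frac (3^m * s)"
  proof -
    have "3^(m + n) * ((s + k) / 3^n) = 3^m * s + of_int (3^m * k)"
      by (simp add: power_add field_simps)
    then show ?thesis by (simp only: frac_add_of_int_right)
  qed
  moreover have "(s + k) / 3^n < (t + k) / 3^n" "(t + k) / 3^n \<le> (s + k) / 3^n + 1"
  proof -
    have "s < t" "t \<le> s + 1" using assms by (auto simp: R_interval_def)
    moreover have "(t - s) / 3^n \<le> t - s" using \<open>s < t\<close> by (simp add: divide_le_eq)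
    ultimately show "(s + k) / 3^n < (t + k) / 3^n" "(t + k) / 3^n \<le> (s + k) / 3^n + 1"
      by (simp_all add: divide_strict_right_mono add_divide_distrib diff_divide_distrib)
  qed
  ultimately show ?thesis
    unfolding R_interval_def using m
    by (intro conjI exI[of _ "m + n"]) auto
qed

lemma R_interval_basic:
  "R_interval 0 1" "R_interval 0 (2/3)" "R_interval (1/3) 1"
  unfolding R_interval_def by (auto intro: exI[of _ 0])

lemma R_interval_affine_image_of_basic:
  assumes "R_interval s t"
  obtains n :: nat and k :: int and s0 t0 :: real
  where "(s0, t0) \<in> {(0, 1), (0, 2/3), (1/3, 1)}"
    and "s = (s0 + k) / 3^n" and "t = (t0 + k) / 3^n"
proof -
  obtain n :: nat where n:
    "(3^n * (t - s) = 1 \<and> frac (3^n * s) = 0) \<or>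
     (3^n * (t - s) = 2/3 \<and> frac (3^n * s) = 0) \<or>
     (3^n * (t - s) = 2/3 \<and> frac (3^n * s) = 1/3)"
    using assms unfolding R_interval_def by blast
  define s0 where "s0 = frac (3^n * s)"
  define t0 where "t0 = s0 + 3^n * (t - s)"
  have "s = (s0 + \<lfloor>3^n * s\<rfloor>) / 3^n" "t = (t0 + \<lfloor>3^n * s\<rfloor>) / 3^n"
    by (simp_all add: s0_def t0_def frac_def field_simps)
  moreover have "(s0, t0) \<in> {(0, 1), (0, 2/3), (1/3, 1)}"
    using n by (auto simp: s0_def t0_def)
  ultimately show thesis using that by blast
qed

lemma has_color_of_int_div:
  fixes a :: int
  assumes "\<not> 3 dvd a" and "N \<ge> 1"
  shows "has_color (a / 3^N) (if a mod 3 = 1 then Red else Blue)"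
proof -
  define p where "p = nat (a mod 3^N)"
  have a_eq: "a = 3^N * (a div 3^N) + int p"
    by (simp add: p_def)
  have "3 dvd (3::int)^N"
    using assms(2) by (simp add: dvd_power)
  then have p_mod: "int p mod 3 = a mod 3"
    by (simp add: p_def mod_mod_cancel)
  have "int p < 3^N"
    by (simp add: p_def)
  then have p_less: "p < 3^N"
    by (metis of_nat_less_iff of_nat_numeral of_nat_power)
  have "a / 3^N = of_int (a div 3^N) + real p / 3^N"
    by (subst a_eq) (simp add: field_simps)
  moreover have "real p / 3^N < 1"
    using p_less by (simp add: divide_less_eq)
  ultimately have "frac (a / 3^N) = real p / 3^N"
    by (simp add: frac_unique_iff)
  moreover have "\<not> 3 dvd p" "0 < p"
    using p_mod assms(1) by presburger+
  moreover have "p mod 3 = nat (a mod 3)"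
    using p_mod by (metis nat_int of_nat_mod of_nat_numeral)
  moreover have "a mod 3 = 1 \<or> a mod 3 = 2"
    using assms(1) by presburger
  ultimately show ?thesis
    unfolding has_color_def using assms p_less
    by (auto simp: nat_mod_distrib)
qed

lemma has_color_affine:
  fixes k :: int
  assumes "has_color x c" and "x \<notin> \<int>"
  shows "has_color ((x + k) / 3^n) c"
proof -
  obtain m p :: nat where m: "m \<ge> 1" and p: "frac x = real p / 3^m"
    and c: "(c = Red \<and> p mod 3 = 1) \<or> (c = Blue \<and> p mod 3 = 2)"
    using assms unfolding has_color_def by auto
  define j where "j = \<lfloor>x\<rfloor>"
  define a where "a = int p + 3^m * (j + k)"
  have x_eq: "x = j + real p / 3^m"
    using p by (simp add: j_def frac_def)
  have "(x + k) / 3^n = a / 3^(m + n)"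
    unfolding x_eq a_def by (simp add: power_add field_simps)
  moreover have "a mod 3 = int (p mod 3)"
    using m by (cases m) (simp_all add: a_def mult.assoc zmod_int)
  then have "\<not> 3 dvd a" and "(if a mod 3 = 1 then Red else Blue) = c"
    using c by (auto simp: dvd_eq_mod_eq_0)
  ultimately show ?thesis
    using has_color_of_int_div[of a "m + n"] m by simp
qed

lemma affine_not_in_Ints:
  fixes x :: real and k :: int
  assumes "x \<notin> \<int>"
  shows "(x + k) / 3^n \<notin> \<int>"
proof
  assume "(x + k) / 3^n \<in> \<int>"
  have "x = 3^n * ((x + k) / 3^n) - k"
    by simp
  also have "\<dots> \<in> \<int>"
    using \<open>(x + k) / 3^n \<in> \<int>\<close> by (intro Ints_diff Ints_mult) auto
  finally show False
    using assms by blast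
qed

text \<open>The two interior points are required not to be integers: the colour of an integer point
  (blue for 0) is not preserved by the maps \<open>x \<mapsto> (x + k) / 3^n\<close>.\<close>

definition colored_R_subdivision :: "color \<Rightarrow> color \<Rightarrow> real \<Rightarrow> real \<Rightarrow> bool" where
  "colored_R_subdivision c1 c2 s t \<longleftrightarrow>
     (\<exists>x1 x2. x1 \<notin> \<int> \<and> x2 \<notin> \<int> \<and>
        R_interval s x1 \<and> R_interval x1 x2 \<and> R_interval x2 t \<and>
        has_color x1 c1 \<and> has_color x2 c2)"

lemma colored_R_subdivision_affine:
  fixes k :: int
  assumes "colored_R_subdivision c1 c2 s t"
  shows "colored_R_subdivision c1 c2 ((s + k) / 3^n) ((t + k) / 3^n)"
proof -
  obtain x1 x2 where x: "x1 \<notin> \<int>" "x2 \<notin> \<int>"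
    and R: "R_interval s x1" "R_interval x1 x2" "R_interval x2 t"
    and c: "has_color x1 c1" "has_color x2 c2"
    using assms unfolding colored_R_subdivision_def by blast
  show ?thesis
    unfolding colored_R_subdivision_def
    using R[THEN R_interval_affine] has_color_affine[OF c(1) x(1)] has_color_affine[OF c(2) x(2)]
      x[THEN affine_not_in_Ints]
    by blast
qed

lemma colored_R_subdivision_basic:
  assumes "(s, t) \<in> {(0, 1), (0, 2/3), (1/3, 1)}" and "c1 \<noteq> c2"
  shows "colored_R_subdivision c1 c2 s t"
proof -
  have unit: "R_interval (k / 3^n) ((k + 1) / 3^n)" for k :: int and n
    using R_interval_affine[OF R_interval_basic(1)] by (simp add: add.commute)
  have left: "R_interval (k / 3^n) ((k + 2/3) / 3^n)" for k :: int and n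
    using R_interval_affine[OF R_interval_basic(2)] by (simp add: add.commute)
  have right: "R_interval ((k + 1/3) / 3^n) ((k + 1) / 3^n)" for k :: int and n
    using R_interval_affine[OF R_interval_basic(3)] by (simp add: add.commute)
  have R: "R_interval 0 (1/3)" "R_interval (1/3) (2/3)" "R_interval (2/3) 1"
    "R_interval (2/9) (1/3)" "R_interval (5/9) (2/3)" "R_interval (2/3) (7/9)"
    "R_interval (1/3) (4/9)" "R_interval 0 (2/9)" "R_interval (1/3) (5/9)" "R_interval 0 (2/3)"
    "R_interval (1/3) 1" "R_interval (7/9) 1" "R_interval (4/9) (2/3)"
    using unit[of 0 1] unit[of 1 1] unit[of 2 1] unit[of 2 2] unit[of 5 2] unit[of 6 2]
      unit[of 3 2] left[of 0 1] left[of 1 1] left[of 0 0] right[of 0 0] right[of 2 1]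
      right[of 1 1]
    by simp_all
  have colors: "has_color (1/3) Red" "has_color (4/9) Red" "has_color (7/9) Red"
    "has_color (2/9) Blue" "has_color (2/3) Blue" "has_color (5/9) Blue"
    using has_color_of_int_div[of 1 1] has_color_of_int_div[of 4 2] has_color_of_int_div[of 7 2]
      has_color_of_int_div[of 2 2] has_color_of_int_div[of 2 1] has_color_of_int_div[of 5 2]
    by simp_all
  have non_int: "x \<notin> \<int>" if "0 < x" "x < 1" for x :: real
    using that by (auto elim: Ints_cases)
  note facts = R colors non_int
  have "colored_R_subdivision Red Blue 0 1"
    unfolding colored_R_subdivision_def
    by (rule exI[of _ "1/3"], rule exI[of _ "2/3"]) (simp add: facts)
  moreover have "colored_R_subdivision Blue Red 0 1"
    unfolding colored_R_subdivision_def
    by (rule exI[of _ "2/9"], rule exI[of _ "1/3"]) (simp add: facts)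
  moreover have "colored_R_subdivision Red Blue 0 (2/3)"
    unfolding colored_R_subdivision_def
    by (rule exI[of _ "1/3"], rule exI[of _ "5/9"]) (simp add: facts)
  moreover have "colored_R_subdivision Blue Red 0 (2/3)"
    unfolding colored_R_subdivision_def
    by (rule exI[of _ "2/9"], rule exI[of _ "1/3"]) (simp add: facts)
  moreover have "colored_R_subdivision Red Blue (1/3) 1"
    unfolding colored_R_subdivision_def
    by (rule exI[of _ "4/9"], rule exI[of _ "2/3"]) (simp add: facts)
  moreover have "colored_R_subdivision Blue Red (1/3) 1"
    unfolding colored_R_subdivision_def
    by (rule exI[of _ "2/3"], rule exI[of _ "7/9"]) (simp add: facts)
  moreover have "(c1, c2) \<in> {(Red, Blue), (Blue, Red)}"
    using assms(2) by (cases c1; cases c2) auto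
  ultimately show ?thesis
    using assms(1) by blast
qed

theorem lemmaB8:
  fixes s t :: real and c1 c2 :: color
  assumes "R_interval s t"
    and "(c1, c2) = (Blue, Red) \<or> (c1, c2) = (Red, Blue)"
  shows "\<exists>x1 x2. s < x1 \<and> x1 < x2 \<and> x2 < t \<and>
           R_interval s x1 \<and> R_interval x1 x2 \<and> R_interval x2 t \<and>
           has_color x1 c1 \<and> has_color x2 c2"
proof -
  obtain n :: nat and k :: int and s0 t0 :: real
    where basic: "(s0, t0) \<in> {(0, 1), (0, 2/3), (1/3, 1)}"
      and s: "s = (s0 + k) / 3^n" and t: "t = (t0 + k) / 3^n"
    using R_interval_affine_image_of_basic[OF assms(1)] .
  have "c1 \<noteq> c2"
    using assms(2) by auto
  with basic have "colored_R_subdivision c1 c2 s t"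
    unfolding s t by (intro colored_R_subdivision_affine colored_R_subdivision_basic)
  then show ?thesis
    unfolding colored_R_subdivision_def by (meson R_interval_def)
qed

end
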